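(* Let $C_1=\{(x,y)\in\mathbb{Z}^2: x\ge0,\ |y|\le x\}$ and $\alpha>0$. Then the divisible sandpile $s_0=(1+\alpha)\mathbf 1_{C_1}$ on the square lattice $\mathbb{Z}^2$ does not stabilize.
   Context: $\mathbb{Z}^2$ has its nearest-neighbour graph structure, $\Delta u(x)=\sum_{y\sim x}(u(y)-u(x))$. $s$ stabilizes if there exists $f:\mathbb{Z}^2\to[0,\infty)$ with $s+\Delta f\le1$ pointwise. *)

theory Defs
  imports Main "HOL.Real"
begin

definition nbrs :: "int \<times> int \<Rightarrow> (int \<times> int) set" where
  "nbrs p = {(fst p + 1, snd p), (fst p - 1, snd p), (fst p, snd p + 1), (fst p, snd p - 1)}"

definition lap :: "(int \<times> int \<Rightarrow> real) \<Rightarrow> int \<times> int \<Rightarrow> real" where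
  "lap u x = (\<Sum>y\<in>nbrs x. (u y - u x))"

definition stabilizes :: "(int \<times> int \<Rightarrow> real) \<Rightarrow> bool" where
  "stabilizes s \<longleftrightarrow> (\<exists>f. (\<forall>x. f x \<ge> 0) \<and> (\<forall>x. s x + lap f x \<le> 1))"

definition C1 :: "(int \<times> int) set" where
  "C1 = {(x, y). x \<ge> 0 \<and> \<bar>y\<bar> \<le> x}"

end

theory Submission
  imports Defs Complex_Main
begin

text \<open>Suppose \<open>f \<ge> 0\<close> stabilizes the sandpile, so \<open>\<Delta>f \<le> -\<alpha>\<close> on the cone \<open>C\<^sub>1\<close>. The function
  \<open>h\<^sub>K(x,y) = ((x+1)\<^sup>2 - y\<^sup>2)(ln K - ln (2x+3))\<close> satisfies \<open>\<Delta>h\<^sub>K \<ge> -4\<close> on the part of the cone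
  where \<open>2x+3 < K\<close> and is \<open>\<le> 0\<close> just outside it. Hence \<open>f - (\<alpha>/8) h\<^sub>K\<close> is strictly superharmonic
  on this finite region and nonnegative on its outer boundary, so by the minimum principle it is
  nonnegative at the origin: \<open>f(0,0) \<ge> (\<alpha>/8)(ln K - ln 3)\<close> for every \<open>K > 3\<close>, which is absurd.\<close>

lemma lap_Pair: "lap u (a, b) = u (a+1, b) + u (a-1, b) + u (a, b+1) + u (a, b-1) - 4 * u (a, b)"
  unfolding lap_def nbrs_def by (simp add: algebra_simps)

lemma lap_diff_scale: "lap (\<lambda>p. f p - c * g p) x = lap f x - c * lap g x"
proof -
  have "lap (\<lambda>p. f p - c * g p) x = (\<Sum>y\<in>nbrs x. (f y - f x) - c * (g y - g x))"
    unfolding lap_def by (rule sum.cong) (auto simp: algebra_simps)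
  also have "\<dots> = lap f x - c * lap g x"
    unfolding lap_def by (simp only: sum_subtractf sum_distrib_left[symmetric])
  finally show ?thesis .
qed

lemma strict_superharmonic_nonneg:
  assumes "finite D"
    and superharm: "\<And>z. z \<in> D \<Longrightarrow> lap w z < 0"
    and boundary: "\<And>z q. z \<in> D \<Longrightarrow> q \<in> nbrs z \<Longrightarrow> q \<notin> D \<Longrightarrow> 0 \<le> w q"
    and "p \<in> D"
  shows "0 \<le> w p"
proof (rule ccontr)
  assume "\<not> 0 \<le> w p"
  define z where "z = arg_min_on w D"
  have "z \<in> D" and zmin: "\<And>q. q \<in> D \<Longrightarrow> w z \<le> w q"
    using arg_min_if_finite[OF \<open>finite D\<close>, of w] \<open>p \<in> D\<close> unfolding z_def by (auto simp: not_less)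
  have "w z < 0" using zmin[OF \<open>p \<in> D\<close>] \<open>\<not> 0 \<le> w p\<close> by simp
  have "0 \<le> lap w z"
    unfolding lap_def
  proof (rule sum_nonneg)
    fix q assume "q \<in> nbrs z"
    then show "0 \<le> w q - w z"
      using zmin[of q] boundary[OF \<open>z \<in> D\<close> \<open>q \<in> nbrs z\<close>] \<open>w z < 0\<close>
      by (cases "q \<in> D") auto
  qed
  with superharm[OF \<open>z \<in> D\<close>] show False by simp
qed

definition truncated_cone :: "real \<Rightarrow> (int \<times> int) set" where
  "truncated_cone K = {p. \<bar>snd p\<bar> \<le> fst p \<and> 2 * real_of_int (fst p) + 3 < K}"

lemma truncated_cone_subset_C1: "truncated_cone K \<subseteq> C1"
  unfolding truncated_cone_def C1_def by auto

lemma finite_truncated_cone: "finite (truncated_cone K)"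
proof (rule finite_subset)
  show "truncated_cone K \<subseteq> {0..\<lceil>K\<rceil>} \<times> {-\<lceil>K\<rceil>..\<lceil>K\<rceil>}"
  proof
    fix p assume "p \<in> truncated_cone K"
    then have "\<bar>snd p\<bar> \<le> fst p" "fst p \<le> \<lceil>K\<rceil>"
      unfolding truncated_cone_def by (auto intro: le_ceiling_iff[THEN iffD2])
    then show "p \<in> {0..\<lceil>K\<rceil>} \<times> {-\<lceil>K\<rceil>..\<lceil>K\<rceil>}" by (cases p) auto
  qed
qed simp

definition barrier :: "real \<Rightarrow> int \<times> int \<Rightarrow> real" where
  "barrier K p = real_of_int ((fst p + 1)\<^sup>2 - (snd p)\<^sup>2) * (ln K - ln (2 * real_of_int (fst p) + 3))"

lemma lap_barrier_ge:
  assumes "\<bar>b\<bar> \<le> a"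
  shows "-4 \<le> lap (barrier K) (a, b)"
proof -
  define X Y where "X = real_of_int a" and "Y = real_of_int b"
  define L1 L0 Lm where "L1 = ln (2*X+5)" and "L0 = ln (2*X+3)" and "Lm = ln (2*X+1)"
  have "X \<ge> 0" using assms unfolding X_def by simp
  have "Y\<^sup>2 \<le> X\<^sup>2"
    using power_mono[of "\<bar>Y\<bar>" X 2] assms unfolding X_def Y_def by simp
  have lap_eq: "lap (barrier K) (a, b) = (X\<^sup>2 - Y\<^sup>2) * (2*L0 - L1 - Lm) - (4*X+4) * (L1 - L0)"
    unfolding lap_Pair barrier_def L1_def L0_def Lm_def X_def Y_def
    by (simp add: algebra_simps power2_eq_square)
  have "(2*X+5) * (2*X+1) \<le> (2*X+3) * (2*X+3)" by (simp add: algebra_simps)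
  then have "ln ((2*X+5) * (2*X+1)) \<le> ln ((2*X+3) * (2*X+3))" using \<open>X \<ge> 0\<close> by simp
  then have concave: "0 \<le> 2*L0 - L1 - Lm"
    unfolding L1_def L0_def Lm_def using \<open>X \<ge> 0\<close> by (simp add: ln_mult)
  have "L1 - L0 = ln ((2*X+5) / (2*X+3))"
    unfolding L1_def L0_def using \<open>X \<ge> 0\<close> by (simp add: ln_div)
  also have "\<dots> \<le> (2*X+5) / (2*X+3) - 1" using \<open>X \<ge> 0\<close> by (intro ln_le_minus_one) simp
  also have "\<dots> = 2 / (2*X+3)" using \<open>X \<ge> 0\<close> by (simp add: field_simps)
  finally have "(4*X+4) * (L1 - L0) \<le> (4*X+4) * (2 / (2*X+3))"
    using \<open>X \<ge> 0\<close> by (intro mult_left_mono) auto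
  also have "\<dots> \<le> 4" using \<open>X \<ge> 0\<close> by (simp add: field_simps)
  finally have "(4*X+4) * (L1 - L0) \<le> 4" .
  moreover have "0 \<le> (X\<^sup>2 - Y\<^sup>2) * (2*L0 - L1 - Lm)"
    using concave \<open>Y\<^sup>2 \<le> X\<^sup>2\<close> by simp
  ultimately show ?thesis unfolding lap_eq by linarith
qed

text \<open>A neighbour leaving the truncated cone either crosses the cut \<open>2x+3 = K\<close>, where the logarithmic
  factor changes sign, or one of the sides \<open>|y| = x + 1\<close> of the shifted cone, where the quadratic
  factor vanishes.\<close>

lemma barrier_nonpos_outside:
  assumes "K > 0" and "(a, b) \<in> truncated_cone K"
    and "q \<in> nbrs (a, b)" and "q \<notin> truncated_cone K"
  shows "barrier K q \<le> 0"
proof -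
  have z: "\<bar>b\<bar> \<le> a" "2 * real_of_int a + 3 < K"
    using assms(2) unfolding truncated_cone_def by auto
  have out: "\<not> (\<bar>snd q\<bar> \<le> fst q \<and> 2 * real_of_int (fst q) + 3 < K)"
    using assms(4) unfolding truncated_cone_def by simp
  consider "q = (a+1, b)" | "q = (a-1, b)" | "q = (a, b+1)" | "q = (a, b-1)"
    using assms(3) unfolding nbrs_def by auto
  then show ?thesis
  proof cases
    case 1
    then have "K \<le> 2 * real_of_int a + 5" using out z by auto
    then have "ln K - ln (2 * real_of_int (a+1) + 3) \<le> 0"
      using \<open>K > 0\<close> by (simp add: algebra_simps)
    moreover have "\<bar>b\<bar>\<^sup>2 \<le> (a+1+1)\<^sup>2" using z by (intro power_mono) auto
    then have "0 \<le> (a+1+1)\<^sup>2 - b\<^sup>2" by simp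
    then have "0 \<le> real_of_int ((a+1+1)\<^sup>2 - b\<^sup>2)" by (simp only: of_int_0_le_iff)
    ultimately show ?thesis unfolding barrier_def using 1 by (simp add: mult_nonneg_nonpos)
  next
    case 2
    then have "\<bar>b\<bar> = a" using out z by auto
    then have "b\<^sup>2 = (fst q + 1)\<^sup>2" using 2 power2_abs[of b] by simp
    then show ?thesis unfolding barrier_def using 2 by simp
  next
    case 3
    then have "\<bar>b+1\<bar> = a + 1" using out z by auto
    then have "(b+1)\<^sup>2 = (fst q + 1)\<^sup>2" using 3 power2_abs[of "b+1"] by simp
    then show ?thesis unfolding barrier_def using 3 by simp
  next
    case 4
    then have "\<bar>b-1\<bar> = a + 1" using out z by auto
    then have "(b-1)\<^sup>2 = (fst q + 1)\<^sup>2" using 4 power2_abs[of "b-1"] by simp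
    then show ?thesis unfolding barrier_def using 4 by simp
  qed
qed

lemma odometer_log_lower_bound:
  assumes "\<alpha> > 0" and "K > 3"
    and f_nonneg: "\<And>x. 0 \<le> f x"
    and f_lap: "\<And>x. x \<in> C1 \<Longrightarrow> lap f x \<le> -\<alpha>"
  shows "\<alpha> / 8 * (ln K - ln 3) \<le> f (0, 0)"
proof -
  define w where "w p = f p - \<alpha> / 8 * barrier K p" for p
  have "0 \<le> w (0, 0)"
  proof (rule strict_superharmonic_nonneg[OF finite_truncated_cone])
    fix z assume "z \<in> truncated_cone K"
    then have "lap f z \<le> -\<alpha>"
      using f_lap truncated_cone_subset_C1 by blast
    moreover have "-4 \<le> lap (barrier K) z"
      using \<open>z \<in> truncated_cone K\<close> lap_barrier_ge[of "snd z" "fst z" K]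
      by (simp add: truncated_cone_def)
    then have "\<alpha> / 8 * -4 \<le> \<alpha> / 8 * lap (barrier K) z"
      using \<open>\<alpha> > 0\<close> by (intro mult_left_mono) auto
    ultimately show "lap w z < 0"
      unfolding w_def lap_diff_scale using \<open>\<alpha> > 0\<close> by linarith
  next
    fix z q assume "z \<in> truncated_cone K" "q \<in> nbrs z" "q \<notin> truncated_cone K"
    then have "barrier K q \<le> 0"
      using barrier_nonpos_outside[of K] \<open>K > 3\<close> by (cases z) simp
    then have "\<alpha> / 8 * barrier K q \<le> 0"
      using \<open>\<alpha> > 0\<close> by (simp add: mult_nonneg_nonpos)
    then show "0 \<le> w q"
      unfolding w_def using f_nonneg[of q] by linarith
  qed (use \<open>K > 3\<close> in \<open>simp add: truncated_cone_def\<close>)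
  then show ?thesis unfolding w_def barrier_def by simp
qed

theorem lemma6p1:
  fixes \<alpha> :: real
  assumes "\<alpha> > 0"
  shows "\<not> stabilizes (\<lambda>p. if p \<in> C1 then 1 + \<alpha> else 0)"
proof
  assume "stabilizes (\<lambda>p. if p \<in> C1 then 1 + \<alpha> else 0)"
  then obtain f where f_nonneg: "\<And>x. 0 \<le> f x"
    and f_stab: "\<And>x. (if x \<in> C1 then 1 + \<alpha> else 0) + lap f x \<le> 1"
    unfolding stabilizes_def by blast
  have f_lap: "lap f x \<le> -\<alpha>" if "x \<in> C1" for x
    using f_stab[of x] that by simp
  define K where "K = 3 * exp (8 * (f (0, 0) + 1) / \<alpha>)"
  have "K > 3" unfolding K_def using f_nonneg[of "(0, 0)"] \<open>\<alpha> > 0\<close> by simp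
  have "ln K - ln 3 = 8 * (f (0, 0) + 1) / \<alpha>" unfolding K_def by (simp add: ln_mult)
  then have "\<alpha> / 8 * (ln K - ln 3) = f (0, 0) + 1" using \<open>\<alpha> > 0\<close> by simp
  with odometer_log_lower_bound[OF \<open>\<alpha> > 0\<close> \<open>K > 3\<close> f_nonneg f_lap] show False by simp
qed

end
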